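(* Let $n\ge 2$ be an integer, let $\gamma\ge 2n+2$ be an integer, and fix $\epsilon\in\left(\frac{1}{\gamma^2},\frac{1}{\gamma}\right)$. Set $\alpha_1=1$ and $\alpha_p=2^{\frac{p-1}{n}}$ for $2\le p\le n$, and $\widehat{\alpha}=\max_{1\le p\le n}\alpha_p$. For $p\in\{1,\dots,n\}$ and $q\in\{0,\dots,2n\}$ define $\psi^{p,q}:[0,1]\to\mathbb{R}$ by $\psi^{p,q}(x)=\alpha_p(x+q\epsilon)$, and $\Psi^q:[0,1]^n\to\mathbb{R}$ by $\Psi^q(x_1,\dots,x_n)=\sum_{p=1}^n\psi^{p,q}(x_p)$. For $k\in\mathbb{N}$ and $i\in\{0,\dots,\gamma^k\}$ put $\lambda^{p,q}_{k,i}=\psi^{p,q}\!\left(\frac{i}{\gamma^k}\right)$, put $\epsilon_k=\frac{\widehat{\alpha}}{\gamma^k}$, and let $A^q_{k,i}$ be the closed interval $\left[\frac{i}{\gamma^k}+q\epsilon,\ \frac{i}{\gamma^k}+\frac{\gamma^2-1}{\gamma^{k+2}}+q\epsilon\right]$. Then for every $p\in\{1,\dots,n\}$ and $q\in\{0,\dots,2n\}$ the following hold: (1) there is a constant $C>0$ independent of $k$ and $i$ such that for all $k\in\mathbb{N}$ and $0\le i\le \gamma^k-1$, $\lambda^{p,q}_{k,i}<\lambda^{p,q}_{k,i+1}\le\lambda^{p,q}_{k,i}+C\,2^{-k}$; (2) for all $k\in\mathbb{N}$, $i\in\{0,\dots,\gamma^k-1\}$ and $i'\in\{0,\dots,\gamma^{k+1}\}$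 such that the closed intervals $A^q_{k,i}$ and $A^q_{k+1,i'}$ do not intersect and $A^q_{k+1,i'}$ lies in the gap between $A^q_{k,i}$ and $A^q_{k,i+1}$, one has $\lambda^{p,q}_{k,i}\le\lambda^{p,q}_{k+1,i'}\le\lambda^{p,q}_{k,i}+\epsilon_k-\epsilon_{k+1}$; (3) for every $k\in\mathbb{N}$ and any two distinct tuples $(i_1,\dots,i_n)\ne(j_1,\dots,j_n)\in\{0,\dots,\gamma^k\}^n$, $$\Psi^q\!\left(\tfrac{i_1}{\gamma^k},\dots,\tfrac{i_n}{\gamma^k}\right)\ne\Psi^q\!\left(\tfrac{j_1}{\gamma^k},\dots,\tfrac{j_n}{\gamma^k}\right).$$
   Context: $\mathbb{N}$ denotes the positive integers. The "gap between $A^q_{k,i}$ and $A^q_{k,i+1}$" is the open interval between the right endpoint of $A^q_{k,i}$ and the left endpoint of $A^q_{k,i+1}$. *)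

theory Defs
  imports Complex_Main
begin

definition alpha :: "nat \<Rightarrow> nat \<Rightarrow> real" where
  "alpha n p = (if p = 1 then 1 else 2 powr ((real p - 1) / real n))"

definition alpha_hat :: "nat \<Rightarrow> real" where
  "alpha_hat n = Max (alpha n ` {1..n})"

definition psi :: "nat \<Rightarrow> real \<Rightarrow> nat \<Rightarrow> nat \<Rightarrow> real \<Rightarrow> real" where
  "psi n eps p q x = alpha n p * (x + real q * eps)"

definition Psi :: "nat \<Rightarrow> real \<Rightarrow> nat \<Rightarrow> (nat \<Rightarrow> real) \<Rightarrow> real" where
  "Psi n eps q x = (\<Sum>p = 1..n. psi n eps p q (x p))"

definition lam :: "nat \<Rightarrow> nat \<Rightarrow> real \<Rightarrow> nat \<Rightarrow> nat \<Rightarrow> nat \<Rightarrow> nat \<Rightarrow> real" where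
  "lam n \<gamma> eps p q k i = psi n eps p q (real i / real \<gamma> ^ k)"

definition eps_k :: "nat \<Rightarrow> nat \<Rightarrow> nat \<Rightarrow> real" where
  "eps_k n \<gamma> k = alpha_hat n / real \<gamma> ^ k"

definition A_left :: "nat \<Rightarrow> real \<Rightarrow> nat \<Rightarrow> nat \<Rightarrow> nat \<Rightarrow> real" where
  "A_left \<gamma> eps q k i = real i / real \<gamma> ^ k + real q * eps"

definition A_right :: "nat \<Rightarrow> real \<Rightarrow> nat \<Rightarrow> nat \<Rightarrow> nat \<Rightarrow> real" where
  "A_right \<gamma> eps q k i =
     real i / real \<gamma> ^ k + (real \<gamma> ^ 2 - 1) / real \<gamma> ^ (k + 2) + real q * eps"

definition A :: "nat \<Rightarrow> real \<Rightarrow> nat \<Rightarrow> nat \<Rightarrow> nat \<Rightarrow> real set" where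
  "A \<gamma> eps q k i = {A_left \<gamma> eps q k i .. A_right \<gamma> eps q k i}"

definition gap :: "nat \<Rightarrow> real \<Rightarrow> nat \<Rightarrow> nat \<Rightarrow> nat \<Rightarrow> real set" where
  "gap \<gamma> eps q k i = {A_right \<gamma> eps q k i <..< A_left \<gamma> eps q k (i + 1)}"

end

theory Submission
  imports Defs "Jordan_Normal_Form.Determinant" "HOL-Library.Z2"
begin

text \<open>Parts (1) and (2) are direct estimates, since each psi p q is affine with slope
  alpha p \<le> alpha_hat.
  Part (3) amounts to the linear independence of \<open>1, t, \<dots>, t^(n-1)\<close> over the integers,
  where \<open>t = 2 powr (1/n)\<close>. Multiplying a relation \<open>\<Sum>j<n. c j * t^j = 0\<close> by \<open>t^r\<close> rotates
  the coefficients, doubling those that wrap around. The \<open>n\<close> rotated relations say that an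
  integer matrix kills the nonzero vector \<open>(t^j)\<close>, so its determinant vanishes; modulo 2
  that matrix is upper triangular with diagonal \<open>c 0\<close>, so \<open>c 0\<close> is even. Rotating the first
  odd coefficient into position 0 shows that all coefficients are even, and halving
  repeatedly makes them divisible by every power of 2.\<close>

definition rotate_coeffs :: "nat \<Rightarrow> nat \<Rightarrow> (nat \<Rightarrow> int) \<Rightarrow> nat \<Rightarrow> int" where
  "rotate_coeffs n r c s = (if s < r then 2 * c (s + n - r) else c (s - r))"

lemma power_mult_sum_rotate:
  fixes t :: "'a :: comm_ring_1"
  assumes tn: "t ^ n = 2" and r: "r \<le> n"
  shows "t ^ r * (\<Sum>j<n. of_int (c j) * t ^ j) = (\<Sum>s<n. of_int (rotate_coeffs n r c s) * t ^ s)"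
proof -
  have low: "(\<Sum>j<n - r. of_int (c j) * t ^ (j + r)) = (\<Sum>s = r..<n. of_int (rotate_coeffs n r c s) * t ^ s)"
    using r by (intro sum.reindex_bij_witness[of _ "\<lambda>s. s - r" "\<lambda>j. j + r"]) (auto simp: rotate_coeffs_def)
  have high: "(\<Sum>j = n - r..<n. of_int (c j) * t ^ (j + r)) = (\<Sum>s<r. of_int (rotate_coeffs n r c s) * t ^ s)"
  proof (intro sum.reindex_bij_witness[of _ "\<lambda>s. s + n - r" "\<lambda>j. j + r - n"])
    fix j assume "j \<in> {n - r..<n}"
    then have "t ^ (j + r) = 2 * t ^ (j + r - n)"
      using tn by (metis le_add_diff_inverse2 le_diff_conv mult.commute power_add atLeastLessThan_iff)
    then show "of_int (rotate_coeffs n r c (j + r - n)) * t ^ (j + r - n) = of_int (c j) * t ^ (j + r)"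
      using r \<open>j \<in> {n - r..<n}\<close> by (auto simp: rotate_coeffs_def)
  qed (use r in auto)
  have "t ^ r * (\<Sum>j<n. of_int (c j) * t ^ j) = (\<Sum>j<n. of_int (c j) * t ^ (j + r))"
    by (simp add: sum_distrib_left power_add mult_ac)
  also have "\<dots> = (\<Sum>j<n - r. of_int (c j) * t ^ (j + r)) + (\<Sum>j = n - r..<n. of_int (c j) * t ^ (j + r))"
    using r by (simp add: lessThan_atLeast0 sum.atLeastLessThan_concat)
  also have "\<dots> = (\<Sum>s<r. of_int (rotate_coeffs n r c s) * t ^ s) + (\<Sum>s = r..<n. of_int (rotate_coeffs n r c s) * t ^ s)"
    by (simp only: low high add.commute)
  also have "\<dots> = (\<Sum>s<n. of_int (rotate_coeffs n r c s) * t ^ s)"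
    using r by (simp add: lessThan_atLeast0 sum.atLeastLessThan_concat)
  finally show ?thesis .
qed

definition rotation_matrix :: "nat \<Rightarrow> (nat \<Rightarrow> int) \<Rightarrow> int mat" where
  "rotation_matrix n c = mat n n (\<lambda>(r, s). rotate_coeffs n r c s)"

lemma det_rotation_matrix_eq_0:
  fixes t :: "'a :: field_char_0"
  assumes n: "n \<ge> 1" and tn: "t ^ n = 2" and rel: "(\<Sum>j<n. of_int (c j) * t ^ j) = 0"
  shows "det (rotation_matrix n c) = 0"
proof -
  let ?N = "map_mat (of_int :: int \<Rightarrow> 'a) (rotation_matrix n c)"
  define w where "w = vec n (\<lambda>s. t ^ s)"
  have N: "?N \<in> carrier_mat n n"
    by (simp add: rotation_matrix_def)
  have "?N *\<^sub>v w = 0\<^sub>v n"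
  proof (rule eq_vecI)
    fix r assume "r < dim_vec (0\<^sub>v n :: 'a vec)"
    then have r: "r < n" by simp
    have "(?N *\<^sub>v w) $ r = (\<Sum>s<n. of_int (rotate_coeffs n r c s) * t ^ s)"
      using r by (auto simp: rotation_matrix_def mult_mat_vec_def scalar_prod_def w_def lessThan_atLeast0 intro!: sum.cong)
    also have "\<dots> = t ^ r * (\<Sum>j<n. of_int (c j) * t ^ j)"
      using power_mult_sum_rotate[OF tn, of r c] r by simp
    finally show "(?N *\<^sub>v w) $ r = 0\<^sub>v n $ r"
      using r rel by simp
  qed (simp add: rotation_matrix_def w_def)
  moreover have "w \<noteq> 0\<^sub>v n"
    using n by (auto simp: w_def dest!: arg_cong[of _ _ "\<lambda>v. v $ 0"])
  moreover have "w \<in> carrier_vec n"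
    by (simp add: w_def)
  ultimately have "det ?N = 0"
    using det_0_iff_vec_prod_zero[OF N] by blast
  then show ?thesis
    by simp
qed

lemma bit_of_int_eq_0_iff: "(of_int k :: bit) = 0 \<longleftrightarrow> even k"
  by (cases "even k") (auto elim!: evenE oddE)

lemma det_rotation_matrix_mod_two:
  "(of_int (det (rotation_matrix n c)) :: bit) = of_int (c 0) ^ n"
proof -
  let ?N = "map_mat (of_int :: int \<Rightarrow> bit) (rotation_matrix n c)"
  have N: "?N \<in> carrier_mat n n"
    by (simp add: rotation_matrix_def)
  have "upper_triangular ?N"
    by (auto simp: upper_triangular_def rotation_matrix_def rotate_coeffs_def)
  then have "det ?N = prod_list (diag_mat ?N)"
    using N by (rule det_upper_triangular)
  also have "diag_mat ?N = replicate n (of_int (c 0))"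
    by (rule nth_equalityI) (auto simp: diag_mat_def rotation_matrix_def rotate_coeffs_def)
  finally show ?thesis
    by simp
qed

lemma root_of_two_relation_const_even:
  fixes t :: "'a :: field_char_0"
  assumes n: "n \<ge> 1" and tn: "t ^ n = 2" and rel: "(\<Sum>j<n. of_int (c j) * t ^ j) = 0"
  shows "even (c 0)"
proof -
  have "(of_int (c 0) :: bit) ^ n = 0"
    using det_rotation_matrix_mod_two[of n c] det_rotation_matrix_eq_0[OF assms] by simp
  then show ?thesis
    using n by (simp add: bit_of_int_eq_0_iff)
qed

lemma root_of_two_relation_coeffs_even:
  fixes t :: "'a :: field_char_0"
  assumes n: "n \<ge> 1" and tn: "t ^ n = 2" and rel: "(\<Sum>j<n. of_int (c j) * t ^ j) = 0"
    and j: "j < n"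
  shows "even (c j)"
proof (rule ccontr)
  assume "odd (c j)"
  define m where "m = (LEAST j. odd (c j))"
  have m: "odd (c m)" "m < n"
    using LeastI[of "\<lambda>j. odd (c j)", OF \<open>odd (c j)\<close>] Least_le[of "\<lambda>j. odd (c j)", OF \<open>odd (c j)\<close>] j
    by (auto simp: m_def)
  have below_m: "i < m \<Longrightarrow> even (c i)" for i
    using not_less_Least[of i "\<lambda>j. odd (c j)"] by (auto simp: m_def)
  define d where "d s = rotate_coeffs n (n - m) c s div 2" for s
  have rotate_eq: "rotate_coeffs n (n - m) c s = 2 * d s" if "s < n" for s
    using that m below_m[of "s - (n - m)"] by (auto simp: d_def rotate_coeffs_def)
  have "t ^ (n - m) * (\<Sum>j<n. of_int (c j) * t ^ j) = (\<Sum>s<n. of_int (rotate_coeffs n (n - m) c s) * t ^ s)"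
    using tn by (rule power_mult_sum_rotate) simp
  also have "\<dots> = 2 * (\<Sum>s<n. of_int (d s) * t ^ s)"
    by (simp add: rotate_eq sum_distrib_left mult.assoc)
  finally have "(\<Sum>s<n. of_int (d s) * t ^ s) = 0"
    using rel by simp
  moreover have "d 0 = c m"
    using m by (simp add: d_def rotate_coeffs_def)
  ultimately show False
    using root_of_two_relation_const_even[OF n tn, of d] m by simp
qed

lemma root_of_two_relation_coeffs_zero:
  fixes t :: "'a :: field_char_0"
  assumes n: "n \<ge> 1" and tn: "t ^ n = 2" and rel: "(\<Sum>j<n. of_int (c j) * t ^ j) = 0"
    and j: "j < n"
  shows "c j = 0"
proof -
  have "2 ^ k dvd c j" for k
    using rel j
  proof (induction k arbitrary: c)
    case (Suc k)
    define e where "e i = c i div 2" for i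
    have c_eq: "i < n \<Longrightarrow> c i = 2 * e i" for i
      using root_of_two_relation_coeffs_even[OF n tn Suc.prems(1)] by (simp add: e_def)
    have "(\<Sum>i<n. of_int (c i) * t ^ i) = 2 * (\<Sum>i<n. of_int (e i) * t ^ i)"
      by (simp add: c_eq sum_distrib_left mult.assoc)
    then have "2 ^ k dvd e j"
      using Suc by simp
    then show ?case
      using c_eq[OF Suc.prems(2)] by simp
  qed simp
  then have "2 ^ nat \<bar>c j\<bar> dvd c j" .
  moreover have "\<bar>c j\<bar> < 2 ^ nat \<bar>c j\<bar>"
    by (metis abs_ge_zero int_nat_eq less_exp of_nat_less_iff of_nat_numeral of_nat_power)
  ultimately show ?thesis
    by (metis dvd_imp_le_int abs_of_nonneg not_le zero_le_power zero_le_numeral)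
qed

lemma two_powr_inverse_power: "n \<ge> 1 \<Longrightarrow> (2 powr (1 / real n)) ^ n = (2::real)"
  by (simp add: powr_realpow[symmetric] powr_powr)

lemma alpha_Suc_eq_power: "alpha n (Suc j) = (2 powr (1 / real n)) ^ j"
  by (simp add: alpha_def powr_realpow[symmetric] powr_powr)

lemma alpha_pos: "0 < alpha n p"
  by (simp add: alpha_def)

lemma alpha_le_alpha_hat: "p \<in> {1..n} \<Longrightarrow> alpha n p \<le> alpha_hat n"
  unfolding alpha_hat_def by (rule Max_ge) auto

lemma lam_Suc_index: "lam n \<gamma> eps p q k (Suc i) = lam n \<gamma> eps p q k i + alpha n p / real \<gamma> ^ k"
  by (simp add: lam_def psi_def add_divide_distrib algebra_simps)

lemma lam_consecutive_bounds:
  assumes "\<gamma> \<ge> 2"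
  shows "lam n \<gamma> eps p q k i < lam n \<gamma> eps p q k (i + 1) \<and>
    lam n \<gamma> eps p q k (i + 1) \<le> lam n \<gamma> eps p q k i + alpha n p * 2 powr (- real k)"
proof -
  have "(2::real) ^ k \<le> real \<gamma> ^ k"
    using assms by (intro power_mono) auto
  then have "alpha n p / real \<gamma> ^ k \<le> alpha n p / 2 ^ k"
    using alpha_pos[of n p] assms by (intro divide_left_mono) auto
  also have "\<dots> = alpha n p * 2 powr (- real k)"
    by (simp add: powr_minus powr_realpow divide_inverse)
  finally show ?thesis
    using assms alpha_pos[of n p] by (simp add: lam_Suc_index)
qed

lemma grid_bounds_if_in_gap:
  fixes \<gamma> :: nat
  assumes \<gamma>: "\<gamma> \<ge> 2" and in_gap: "A \<gamma> eps q (k + 1) i' \<subseteq> gap \<gamma> eps q k i"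
  shows "real i / real \<gamma> ^ k \<le> real i' / real \<gamma> ^ (k + 1)"
    and "real i' / real \<gamma> ^ (k + 1) \<le> real i / real \<gamma> ^ k + (1 / real \<gamma> ^ k - 1 / real \<gamma> ^ (k + 1))"
proof -
  define g where "g = real \<gamma>"
  have g: "g \<ge> 2"
    using \<gamma> by (simp add: g_def)
  have width_nonneg: "0 \<le> (g\<^sup>2 - 1) / g ^ m" for m
    using g one_le_power[of g 2] by (intro divide_nonneg_nonneg) auto
  have "A_left \<gamma> eps q (k + 1) i' \<le> A_right \<gamma> eps q (k + 1) i'"
    using width_nonneg[of "k + 1 + 2", unfolded g_def] unfolding A_left_def A_right_def by linarith
  then have "A_left \<gamma> eps q (k + 1) i' \<in> gap \<gamma> eps q k i"
    and "A_right \<gamma> eps q (k + 1) i' \<in> gap \<gamma> eps q k i"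
    using in_gap by (auto simp: A_def)
  then have left: "real i / g ^ k + (g\<^sup>2 - 1) / g ^ (k + 2) < real i' / g ^ (k + 1)"
    and right: "real i' / g ^ (k + 1) + (g\<^sup>2 - 1) / g ^ (k + 3) < real (i + 1) / g ^ k"
    by (simp_all add: gap_def A_left_def A_right_def g_def numeral_3_eq_3)
  have "real i / g ^ k \<le> real i' / g ^ (k + 1)"
    using left width_nonneg[of "k + 2"] by linarith
  then show "real i / real \<gamma> ^ k \<le> real i' / real \<gamma> ^ (k + 1)"
    unfolding g_def .
  have "real i' / g ^ (k + 1) < real (i + 1) / g ^ k"
    using right width_nonneg[of "k + 3"] by linarith
  also have "\<dots> = real (i + 1) * g / g ^ (k + 1)"
    using g by simp
  finally have "real i' / g ^ (k + 1) < real (i + 1) * g / g ^ (k + 1)" .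
  then have "real i' < real (i + 1) * g"
    using g by (meson divide_less_cancel zero_less_power order.strict_trans2 zero_less_numeral)
  then have "i' < (i + 1) * \<gamma>"
    unfolding g_def by (metis of_nat_less_iff of_nat_mult)
  then have "i' + 1 \<le> (i + 1) * \<gamma>"
    by simp
  then have "real i' \<le> real (i + 1) * g - 1"
    unfolding g_def by (metis of_nat_add of_nat_1 of_nat_le_iff of_nat_mult le_diff_eq)
  then have "real i' / g ^ (k + 1) \<le> (real (i + 1) * g - 1) / g ^ (k + 1)"
    using g by (simp add: divide_right_mono)
  also have "\<dots> = real i / g ^ k + (1 / g ^ k - 1 / g ^ (k + 1))"
    using g by (simp add: field_simps)
  finally show "real i' / real \<gamma> ^ (k + 1) \<le> real i / real \<gamma> ^ k + (1 / real \<gamma> ^ k - 1 / real \<gamma> ^ (k + 1))"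
    unfolding g_def .
qed

lemma lam_bounds_if_in_gap:
  assumes \<gamma>: "\<gamma> \<ge> 2" and p: "p \<in> {1..n}" and in_gap: "A \<gamma> eps q (k + 1) i' \<subseteq> gap \<gamma> eps q k i"
  shows "lam n \<gamma> eps p q k i \<le> lam n \<gamma> eps p q (k + 1) i' \<and>
    lam n \<gamma> eps p q (k + 1) i' \<le> lam n \<gamma> eps p q k i + eps_k n \<gamma> k - eps_k n \<gamma> (k + 1)"
proof -
  define D where "D = real i' / real \<gamma> ^ (k + 1) - real i / real \<gamma> ^ k"
  have D: "0 \<le> D" "D \<le> 1 / real \<gamma> ^ k - 1 / real \<gamma> ^ (k + 1)"
    using grid_bounds_if_in_gap[OF \<gamma> in_gap] by (simp_all add: D_def)
  have "lam n \<gamma> eps p q (k + 1) i' = lam n \<gamma> eps p q k i + alpha n p * D"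
    by (simp add: lam_def psi_def D_def algebra_simps)
  moreover have "alpha n p * D \<le> alpha_hat n * (1 / real \<gamma> ^ k - 1 / real \<gamma> ^ (k + 1))"
    using D alpha_pos[of n p] alpha_le_alpha_hat[OF p] by (intro mult_mono) auto
  moreover have "alpha_hat n * (1 / real \<gamma> ^ k - 1 / real \<gamma> ^ (k + 1)) = eps_k n \<gamma> k - eps_k n \<gamma> (k + 1)"
    by (simp add: eps_k_def right_diff_distrib)
  ultimately show ?thesis
    using D alpha_pos[of n p] by simp
qed

lemma Psi_grid_injective:
  assumes n: "n \<ge> 1" and \<gamma>: "\<gamma> > 0" and ne: "\<exists>r \<in> {1..n}. ii r \<noteq> jj r"
  shows "Psi n eps q (\<lambda>r. real (ii r) / real \<gamma> ^ k) \<noteq> Psi n eps q (\<lambda>r. real (jj r) / real \<gamma> ^ k)"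
proof
  assume eq: "Psi n eps q (\<lambda>r. real (ii r) / real \<gamma> ^ k) = Psi n eps q (\<lambda>r. real (jj r) / real \<gamma> ^ k)"
  define t where "t = 2 powr (1 / real n)"
  define c where "c j = int (ii (Suc j)) - int (jj (Suc j))" for j
  have "Psi n eps q (\<lambda>r. real (ii r) / real \<gamma> ^ k) - Psi n eps q (\<lambda>r. real (jj r) / real \<gamma> ^ k)
      = (\<Sum>p = 1..n. alpha n p * ((real (ii p) - real (jj p)) / real \<gamma> ^ k))"
    by (simp add: Psi_def psi_def sum_subtractf[symmetric] algebra_simps diff_divide_distrib)
  also have "\<dots> = (\<Sum>j<n. of_int (c j) * t ^ j) / real \<gamma> ^ k"
    by (simp add: sum.atLeast1_atMost_eq sum_divide_distrib c_def alpha_Suc_eq_power t_def mult_ac)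
  finally have "(\<Sum>j<n. of_int (c j) * t ^ j) = 0"
    using eq \<gamma> by simp
  moreover obtain r where r: "r \<in> {1..n}" "ii r \<noteq> jj r"
    using ne by blast
  ultimately have "c (r - 1) = 0"
    using root_of_two_relation_coeffs_zero[OF n two_powr_inverse_power[OF n]] by (auto simp: t_def)
  then show False
    using r by (simp add: c_def)
qed

theorem lemma3p2:
  fixes n \<gamma> :: nat and eps :: real
  assumes "n \<ge> 2" and "\<gamma> \<ge> 2 * n + 2"
    and "1 / real \<gamma> ^ 2 < eps" and "eps < 1 / real \<gamma>"
  shows "\<forall>p \<in> {1..n}. \<forall>q \<in> {0..2*n}.
    (\<exists>C > 0. \<forall>k \<ge> 1. \<forall>i \<le> \<gamma> ^ k - 1.
        lam n \<gamma> eps p q k i < lam n \<gamma> eps p q k (i + 1) \<and>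
        lam n \<gamma> eps p q k (i + 1) \<le> lam n \<gamma> eps p q k i + C * 2 powr (- real k))
  \<and> (\<forall>k \<ge> 1. \<forall>i \<le> \<gamma> ^ k - 1. \<forall>i' \<le> \<gamma> ^ (k + 1).
        A \<gamma> eps q k i \<inter> A \<gamma> eps q (k + 1) i' = {} \<and>
        A \<gamma> eps q (k + 1) i' \<subseteq> gap \<gamma> eps q k i \<longrightarrow>
        lam n \<gamma> eps p q k i \<le> lam n \<gamma> eps p q (k + 1) i' \<and>
        lam n \<gamma> eps p q (k + 1) i' \<le>
          lam n \<gamma> eps p q k i + eps_k n \<gamma> k - eps_k n \<gamma> (k + 1))
  \<and> (\<forall>k \<ge> 1. \<forall>ii jj :: nat \<Rightarrow> nat.
        (\<forall>r \<in> {1..n}. ii r \<le> \<gamma> ^ k \<and> jj r \<le> \<gamma> ^ k) \<and> (\<exists>r \<in> {1..n}. ii r \<noteq> jj r) \<longrightarrow>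
        Psi n eps q (\<lambda>r. real (ii r) / real \<gamma> ^ k) \<noteq>
        Psi n eps q (\<lambda>r. real (jj r) / real \<gamma> ^ k))"
proof -
  have \<gamma>: "\<gamma> \<ge> 2" and n: "n \<ge> 1"
    using assms(1,2) by simp_all
  show ?thesis
    using lam_consecutive_bounds[OF \<gamma>] alpha_pos lam_bounds_if_in_gap[OF \<gamma>] Psi_grid_injective[OF n] \<gamma>
    by (intro ballI conjI) (blast | auto)+
qed

end
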